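(* Let $q$ be an indeterminate and let $l$ be a positive integer. For $(a,b)\in\{(1,1),(1,0),(0,1)\}$ the following identity of formal power series in $z$ holds: \[ \sum_{m\geq0}\sum_{k\geq0} h_{m-2k}(\{1\}^{k+a},\{q\}^{k+b})\left(\frac{q^l}{[l]^2}\right)^k z^m =\frac{[l]^2}{[2l]}\cdot \begin{cases} \dfrac{[l+1]}{[l]-[l+1]z}-\dfrac{q[l-1]}{[l]-q[l-1]z}, & (a,b)=(1,1),\\[2mm] \dfrac{1}{[l]-[l+1]z}+\dfrac{q^l}{[l]-q[l-1]z}, & (a,b)=(1,0),\\[2mm] \dfrac{q^l}{[l]-[l+1]z}+\dfrac{1}{[l]-q[l-1]z}, & (a,b)=(0,1). \end{cases} \]
   Context: For an integer $k\ge 0$, $[k]=\frac{1-q^k}{1-q}$. For integers $r,s\geq0$, $h_n(\{1\}^r,\{x\}^s)$ denotes the $n$-th complete homogeneous symmetric function in $r+s$ variables of which $r$ are specialized to $1$ and $s$ to $x$, i.e. $\sum_{n\geq0}h_n(\{1\}^r,\{x\}^s)z^n=\frac{1}{(1-z)^r(1-xz)^s}$; in particular $h_n=0$ for $n<0$. By convention $h_n(\{1\}^r,\{x\}^s)=0$ if $r<0$ or $s<0$. *)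

theory Defs
  imports "HOL-Computational_Algebra.Computational_Algebra"
begin

type_synonym qfun = "rat poly fract"

definition qvar :: qfun where
  "qvar = Fract [:0, 1:] 1"

definition qint :: "nat \<Rightarrow> qfun" where
  "qint k = (1 - qvar ^ k) / (1 - qvar)"

definition hcomp :: "int \<Rightarrow> nat \<Rightarrow> nat \<Rightarrow> 'a::field \<Rightarrow> 'a" where
  "hcomp n r s x = (if n < 0 then 0
     else fps_nth (inverse ((1 - fps_X) ^ r * (1 - fps_const x * fps_X) ^ s)) (nat n))"

end

theory Submission
  imports Defs
begin

text \<open>With \<open>t = q\<^sup>l/[l]\<^sup>2\<close>, the k-th summand of the left-hand side is
  \<open>t\<^sup>k z\<^bsup>2k\<^esup> / ((1 - z)\<^bsup>k+a\<^esup> (1 - qz)\<^bsup>k+b\<^esup>)\<close>, so the series is geometric and equals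
  \<open>(1 - z)\<^bsup>1-a\<^esup> (1 - qz)\<^bsup>1-b\<^esup> / ((1 - z)(1 - qz) - t z\<^sup>2)\<close>.
  Multiplied by \<open>[l]\<^sup>2\<close>, this quadratic denominator factors as \<open>([l] - [l+1] z)([l] - q[l-1] z)\<close>,
  and the three right-hand sides are the corresponding partial fraction decompositions.
  Every coefficient identity needed is a polynomial identity in q and \<open>q\<^sup>l\<close> once the
  denominators \<open>1 - q\<close> of the q-integers are cleared.\<close>

lemma qvar_power_eq: "qvar ^ k = Fract ([:0, 1:] ^ k) 1"
  by (induction k) (simp_all add: qvar_def One_fract_def mult_fract)

lemma qvar_power_neq_1:
  assumes "k > 0"
  shows "qvar ^ k \<noteq> 1"
proof
  assume "qvar ^ k = 1"
  then have "[:0, 1:] ^ k = (1 :: rat poly)"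
    by (simp add: qvar_power_eq One_fract_def eq_fract)
  then have "poly ([:0, 1:] ^ k) 0 = (1 :: rat)"
    by simp
  then show False
    using assms by (simp add: poly_power power_0_left)
qed

lemma qvar_neq_1: "qvar \<noteq> 1"
  using qvar_power_neq_1[of 1] by simp

lemma qint_nonzero: "k > 0 \<Longrightarrow> qint k \<noteq> 0"
  using qvar_neq_1 qvar_power_neq_1[of k] by (simp add: qint_def)

lemma qint_identities:
  assumes "l > 0"
  shows qint_succ_diff_pred: "qint (l + 1) - qvar * qint (l - 1) = 1 + qvar ^ l"
    and qint_double: "qint l * (1 + qvar ^ l) = qint (2 * l)"
    and qvar_qint_double_eq_pred_succ: "qvar * qint (l - 1) + qvar ^ l * qint (l + 1) = qvar * qint (2 * l)"
    and qint_double_eq_succ_pred: "qvar ^ l * (qvar * qint (l - 1)) + qint (l + 1) = qint (2 * l)"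
    and qint_times_1_plus_qvar: "qint l * (1 + qvar) = qint (l + 1) + qvar * qint (l - 1)"
    and qint_square_times_qvar: "qint l ^ 2 * qvar - qvar ^ l = qint (l + 1) * (qvar * qint (l - 1))"
proof -
  define y where "y = qvar ^ l"
  have cancel: "u = v" if "u * (1 - qvar) ^ 2 = v * (1 - qvar) ^ 2" for u v
    using that qvar_neq_1 by simp
  have qint_times: "qint k * (1 - qvar) = 1 - qvar ^ k" for k
    using qvar_neq_1 by (simp add: qint_def)
  have "qvar * qint (l - 1) * (1 - qvar) = qvar * (1 - qvar ^ (l - 1))"
    by (simp add: mult.assoc qint_times)
  also have "\<dots> = qvar - y"
    using assms by (simp add: y_def right_diff_distrib flip: power_Suc)
  finally have pred: "qvar * qint (l - 1) * (1 - qvar) = qvar - y" .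
  have times: "qint l * (1 - qvar) = 1 - y"
    "qint (l + 1) * (1 - qvar) = 1 - qvar * y"
    "qint (2 * l) * (1 - qvar) = 1 - y * y"
    by (simp_all add: y_def qint_times mult_2 power_add)
  show "qint (l + 1) - qvar * qint (l - 1) = 1 + qvar ^ l"
    unfolding y_def[symmetric] by (rule cancel) (use pred times in algebra)
  show "qint l * (1 + qvar ^ l) = qint (2 * l)"
    unfolding y_def[symmetric] by (rule cancel) (use pred times in algebra)
  show "qvar * qint (l - 1) + qvar ^ l * qint (l + 1) = qvar * qint (2 * l)"
    unfolding y_def[symmetric] by (rule cancel) (use pred times in algebra)
  show "qvar ^ l * (qvar * qint (l - 1)) + qint (l + 1) = qint (2 * l)"
    unfolding y_def[symmetric] by (rule cancel) (use pred times in algebra)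
  show "qint l * (1 + qvar) = qint (l + 1) + qvar * qint (l - 1)"
    unfolding y_def[symmetric] by (rule cancel) (use pred times in algebra)
  show "qint l ^ 2 * qvar - qvar ^ l = qint (l + 1) * (qvar * qint (l - 1))"
    unfolding y_def[symmetric] by (rule cancel) (use pred times in algebra)
qed

lemma fps_recurrence_sum_mult:
  fixes P C N :: "'a::comm_ring_1 fps" and A :: "nat \<Rightarrow> 'a fps"
  assumes order: "\<And>k j. j < k \<Longrightarrow> A k $ j = 0"
    and "C $ 0 = 0"
    and start: "P * A 0 = N"
    and step: "\<And>k. P * A (Suc k) = C * A k"
  shows "(P - C) * Abs_fps (\<lambda>m. \<Sum>k\<le>m. A k $ m) = N"
proof (rule fps_ext)
  fix m
  \<comment> \<open>The series is \<open>\<Sum>\<^sub>k A k\<close>, well defined because \<open>A k\<close> has order at least k.\<close>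
  have telescope: "(P - C) * (\<Sum>k\<le>n. A k) = N - C * A n" for n
    by (induction n) (simp_all add: algebra_simps start step)
  have truncate: "(\<Sum>k\<le>i. A k $ i) = (\<Sum>k\<le>m. A k) $ i" if "i \<le> m" for i
    using that order by (simp add: fps_sum_nth) (intro sum.mono_neutral_left; auto)
  have "C $ i * A m $ (m - i) = 0" if "i \<le> m" for i
    using \<open>C $ 0 = 0\<close> order[of "m - i" m] that by (cases "i = 0") auto
  then have "(C * A m) $ m = 0"
    by (simp add: fps_mult_nth)
  then have "((P - C) * (\<Sum>k\<le>m. A k)) $ m = N $ m"
    by (simp add: telescope)
  then show "((P - C) * Abs_fps (\<lambda>m. \<Sum>k\<le>m. A k $ m)) $ m = N $ m"
    by (simp add: fps_mult_nth truncate)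
qed

lemma hcomp_eq_fps_nth:
  "hcomp (int m - int j) r s x
     = (fps_X ^ j * inverse ((1 - fps_X) ^ r * (1 - fps_const x * fps_X) ^ s)) $ m"
  by (simp add: hcomp_def fps_X_power_mult_nth nat_diff_distrib)

lemma hcomp_series_times_denominator:
  fixes x t :: "'a::field" and a b :: nat
  assumes "a \<le> 1" and "b \<le> 1"
  shows "((1 - fps_X) * (1 - fps_const x * fps_X) - fps_const t * fps_X ^ 2)
           * Abs_fps (\<lambda>m. \<Sum>k\<le>m. hcomp (int m - 2 * int k) (k + a) (k + b) x * t ^ k)
         = (1 - fps_X) ^ (1 - a) * (1 - fps_const x * fps_X) ^ (1 - b)"
proof -
  define P :: "'a fps" where "P = (1 - fps_X) * (1 - fps_const x * fps_X)"
  define Q :: "nat \<Rightarrow> 'a fps"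
    where "Q k = (1 - fps_X) ^ (k + a) * (1 - fps_const x * fps_X) ^ (k + b)" for k
  define A where "A k = fps_const (t ^ k) * (fps_X ^ (2 * k) * inverse (Q k))" for k
  have A_nth: "A k $ m = hcomp (int m - 2 * int k) (k + a) (k + b) x * t ^ k" for k m
    using hcomp_eq_fps_nth[of m "2 * k" "k + a" "k + b" x] by (simp add: A_def Q_def mult.commute)
  have P_inverse: "P * inverse P = 1"
    by (rule inverse_mult_eq_1') (simp add: P_def)
  have "Q (Suc k) = Q k * P" for k
    by (simp add: Q_def P_def mult_ac)
  then have Q_step: "P * inverse (Q (Suc k)) = inverse (Q k)" for k
    by (simp add: fps_inverse_mult mult.left_commute[of P] P_inverse)
  have step: "P * A (Suc k) = fps_const t * fps_X ^ 2 * A k" for k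
  proof -
    have X_power: "fps_X ^ (2 * Suc k) = fps_X ^ 2 * (fps_X ^ (2 * k) :: 'a fps)"
      by (simp flip: power_add)
    have "P * A (Suc k)
        = fps_const t * fps_X ^ 2 * (fps_const (t ^ k) * (fps_X ^ (2 * k) * (P * inverse (Q (Suc k)))))"
      unfolding A_def X_power by (simp only: power_Suc mult_ac flip: fps_const_mult)
    then show ?thesis
      by (simp only: Q_step A_def)
  qed
  have "P = (1 - fps_X) ^ (1 - a) * (1 - fps_const x * fps_X) ^ (1 - b) * Q 0"
    using assms by (simp add: P_def Q_def mult_ac flip: power_add)
  moreover have "Q 0 * inverse (Q 0) = 1"
    by (rule inverse_mult_eq_1') (simp add: Q_def fps_power_zeroth)
  ultimately have start: "P * A 0 = (1 - fps_X) ^ (1 - a) * (1 - fps_const x * fps_X) ^ (1 - b)"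
    by (simp add: A_def mult.assoc)
  have "j < k \<Longrightarrow> A k $ j = 0" for j k
    by (simp add: A_nth hcomp_def)
  from fps_recurrence_sum_mult[of A "fps_const t * fps_X ^ 2" P, OF this _ start step]
  show ?thesis
    by (simp add: A_nth P_def)
qed

lemma fps_linear_factors_mult:
  fixes a b c :: "'a::comm_ring_1"
  shows "(fps_const a - fps_const b * fps_X) * (fps_const a - fps_const c * fps_X)
       = fps_const (a * a) - fps_const (a * (b + c)) * fps_X + fps_const (b * c) * fps_X ^ 2"
  by (simp add: algebra_simps power2_eq_square flip: fps_const_mult fps_const_add)

lemma qint_denominator_factorization:
  assumes "l > 0"
  shows "fps_const ((qint l)\<^sup>2) * ((1 - fps_X) * (1 - fps_const qvar * fps_X)
           - fps_const (qvar ^ l / (qint l)\<^sup>2) * fps_X ^ 2)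
       = (fps_const (qint l) - fps_const (qint (l + 1)) * fps_X)
           * (fps_const (qint l) - fps_const (qvar * qint (l - 1)) * fps_X)"
proof -
  have "qint l \<noteq> 0"
    using assms qint_nonzero by blast
  then have "fps_const ((qint l)\<^sup>2) * ((1 - fps_X) * (1 - fps_const qvar * fps_X)
           - fps_const (qvar ^ l / (qint l)\<^sup>2) * fps_X ^ 2)
      = fps_const (qint l * qint l) - fps_const (qint l * (qint l * (1 + qvar))) * fps_X
          + fps_const ((qint l)\<^sup>2 * qvar - qvar ^ l) * fps_X ^ 2"
    by (simp add: algebra_simps power2_eq_square flip: fps_const_mult fps_const_add)
  also have "\<dots> = (fps_const (qint l) - fps_const (qint (l + 1)) * fps_X)
           * (fps_const (qint l) - fps_const (qvar * qint (l - 1)) * fps_X)"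
    unfolding fps_linear_factors_mult qint_times_1_plus_qvar[OF assms] qint_square_times_qvar[OF assms] ..
  finally show ?thesis .
qed

lemma fps_divide_times_cancel:
  fixes f g h :: "'a::field fps"
  assumes "g $ 0 \<noteq> 0"
  shows "f / g * (g * h) = f * h"
proof -
  have "f / g * (g * h) = f * (inverse g * g) * h"
    using assms by (simp add: fps_divide_unit mult.assoc)
  then show ?thesis
    using assms by (simp add: inverse_mult_eq_1)
qed

lemma fps_eq_partial_fractions:
  fixes L M1 M2 T c1 c2 \<nu> :: "'a::field" and D F :: "'a fps"
  assumes "L \<noteq> 0" and "T \<noteq> 0"
    and factorization: "fps_const (L\<^sup>2) * D
           = (fps_const L - fps_const M1 * fps_X) * (fps_const L - fps_const M2 * fps_X)"
    and DF: "D * F = 1 - fps_const \<nu> * fps_X"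
    and constant_coeff: "L * (c1 + c2) = T"
    and linear_coeff: "c1 * M2 + c2 * M1 = \<nu> * T"
  shows "F = fps_const (L\<^sup>2 / T) * (fps_const c1 / (fps_const L - fps_const M1 * fps_X)
                                    + fps_const c2 / (fps_const L - fps_const M2 * fps_X))"
proof -
  define K where "K = L\<^sup>2 / T"
  define E1 where "E1 = fps_const L - fps_const M1 * fps_X"
  define E2 where "E2 = fps_const L - fps_const M2 * fps_X"
  have units: "E1 $ 0 \<noteq> 0" "E2 $ 0 \<noteq> 0"
    using \<open>L \<noteq> 0\<close> by (simp_all add: E1_def E2_def)
  have cancel1: "fps_const c1 / E1 * (E1 * E2) = fps_const c1 * E2"
    by (rule fps_divide_times_cancel[OF units(1)])
  have cancel2: "fps_const c2 / E2 * (E1 * E2) = fps_const c2 * E1"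
    using fps_divide_times_cancel[OF units(2)] by (simp only: mult.commute[of E1])
  have "fps_const K * (fps_const c1 / E1 + fps_const c2 / E2) * (E1 * E2)
      = fps_const K * (fps_const c1 * E2 + fps_const c2 * E1)"
    by (simp only: mult.assoc distrib_right cancel1 cancel2)
  also have "\<dots> = fps_const (K * (L * (c1 + c2))) - fps_const (K * (c1 * M2 + c2 * M1)) * fps_X"
    unfolding E1_def E2_def by (simp only: flip: fps_const_mult fps_const_add) algebra
  also have "\<dots> = fps_const (L\<^sup>2) * (1 - fps_const \<nu> * fps_X)"
    using \<open>T \<noteq> 0\<close> by (simp add: K_def constant_coeff linear_coeff right_diff_distrib)
  also have "\<dots> = F * (E1 * E2)"
    unfolding E1_def E2_def DF[symmetric] factorization[symmetric] by (simp only: ac_simps)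
  finally have "fps_const K * (fps_const c1 / E1 + fps_const c2 / E2) * (E1 * E2) = F * (E1 * E2)" .
  moreover have "E1 * E2 \<noteq> 0"
    using units by auto
  ultimately show ?thesis
    unfolding K_def[symmetric] E1_def[symmetric] E2_def[symmetric] by simp
qed

theorem lemma2p1:
  fixes l a b :: nat
  assumes "l > 0"
    and "(a, b) \<in> {(1, 1), (1, 0), (0, 1)}"
  shows "Abs_fps (\<lambda>m. \<Sum>k\<le>m. hcomp (int m - 2 * int k) (k + a) (k + b) qvar
                              * (qvar ^ l / (qint l)\<^sup>2) ^ k)
       = fps_const ((qint l)\<^sup>2 / qint (2 * l)) *
         (if (a, b) = (1, 1) then
            fps_const (qint (l + 1)) / (fps_const (qint l) - fps_const (qint (l + 1)) * fps_X)
            - fps_const (qvar * qint (l - 1)) / (fps_const (qint l) - fps_const (qvar * qint (l - 1)) * fps_X)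
          else if (a, b) = (1, 0) then
            1 / (fps_const (qint l) - fps_const (qint (l + 1)) * fps_X)
            + fps_const (qvar ^ l) / (fps_const (qint l) - fps_const (qvar * qint (l - 1)) * fps_X)
          else
            fps_const (qvar ^ l) / (fps_const (qint l) - fps_const (qint (l + 1)) * fps_X)
            + 1 / (fps_const (qint l) - fps_const (qvar * qint (l - 1)) * fps_X))"
proof -
  define F where "F = Abs_fps (\<lambda>m. \<Sum>k\<le>m. hcomp (int m - 2 * int k) (k + a) (k + b) qvar
                              * (qvar ^ l / (qint l)\<^sup>2) ^ k)"
  define D where "D = (1 - fps_X) * (1 - fps_const qvar * fps_X)
                      - fps_const (qvar ^ l / (qint l)\<^sup>2) * fps_X ^ 2"
  have DF: "D * F = (1 - fps_X) ^ (1 - a) * (1 - fps_const qvar * fps_X) ^ (1 - b)"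
    unfolding D_def F_def using assms(2) by (intro hcomp_series_times_denominator) auto
  have "qint l \<noteq> 0" "qint (2 * l) \<noteq> 0"
    using assms(1) qint_nonzero by simp_all
  note partial_fractions = fps_eq_partial_fractions[where F = F, OF this
      qint_denominator_factorization[OF assms(1), folded D_def]]
  from assms(2) consider "a = 1" "b = 1" | "a = 1" "b = 0" | "a = 0" "b = 1"
    by auto
  then show ?thesis
  proof cases
    case 1
    have denominator: "D * F = 1 - fps_const 0 * fps_X"
      using DF 1 by simp
    have constant_coeff: "qint l * (qint (l + 1) + - (qvar * qint (l - 1))) = qint (2 * l)"
      by (simp only: add_uminus_conv_diff qint_succ_diff_pred[OF assms(1)] qint_double[OF assms(1)])
    have linear_coeff: "qint (l + 1) * (qvar * qint (l - 1)) + - (qvar * qint (l - 1)) * qint (l + 1)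
        = 0 * qint (2 * l)"
      by simp
    from partial_fractions[OF denominator constant_coeff linear_coeff] show ?thesis
      using 1 by (simp add: F_def fps_divide_uminus flip: fps_const_neg)
  next
    case 2
    have denominator: "D * F = 1 - fps_const qvar * fps_X"
      using DF 2 by simp
    have linear_coeff: "1 * (qvar * qint (l - 1)) + qvar ^ l * qint (l + 1) = qvar * qint (2 * l)"
      by (simp only: mult_1_left qvar_qint_double_eq_pred_succ[OF assms(1)])
    from partial_fractions[OF denominator qint_double[OF assms(1)] linear_coeff] show ?thesis
      using 2 by (simp add: F_def)
  next
    case 3
    have denominator: "D * F = 1 - fps_const 1 * fps_X"
      using DF 3 by simp
    have constant_coeff: "qint l * (qvar ^ l + 1) = qint (2 * l)"
      by (simp only: add.commute[of "qvar ^ l"] qint_double[OF assms(1)])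
    have linear_coeff: "qvar ^ l * (qvar * qint (l - 1)) + 1 * qint (l + 1) = 1 * qint (2 * l)"
      by (simp only: mult_1_left qint_double_eq_succ_pred[OF assms(1)])
    from partial_fractions[OF denominator constant_coeff linear_coeff] show ?thesis
      using 3 by (simp add: F_def)
  qed
qed

end
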